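(* Consider a finite super-modular game with player set $\mathcal V$ and binary action sets $\{\pm1\}$. Write $x\uparrow y$ ($x\downarrow y$) if $y$ is reachable from $x$ by a monotone (anti-monotone) I-path, and $x\to y$ if $y$ is reachable from $x$ by an I-path. Then for all $x,x',y,z\in\mathcal X$: (i) if $x\uparrow y$ and $x\uparrow z$, then $x\uparrow (y\vee z)$; (ii) if $x\downarrow y$ and $x\downarrow z$, then $x\downarrow(y\wedge z)$; (iii) if $x\uparrow y$ and $x'\ge x$, then $x'\uparrow(y\vee x')$; (iv) if $x\downarrow y$ and $x'\le x$, then $x'\downarrow(y\wedge x')$; (v) if $x\to y$, then there exist $y''\le y\le y'$ with $x\uparrow y'$ and $x\downarrow y''$. The same five statements hold with I-paths replaced throughout by BR-paths.
   Context: Game: finite player set $\mathcal V$, each player has action set $\{-1,+1\}$, configurations $x\in\mathcal X=\{-1,+1\}^{\mathcal V}$, utilities $u_i:\mathcal X\to\mathbb R$; write $u_i(x)=u_i(x_i,x_{-i})$. The game is super-modular if for every $i$, $u_i(1,x_{-i})-u_i(-1,x_{-i})\ge u_i(1,y_{-i})-u_i(-1,y_{-i})$ whenever $x_{-i}\ge y_{-i}$ (componentwise order). $x\vee y$, $x\wedge y$ are the entrywise max and min. Paths: a length-$l$ admissible path from $x$ to $y$ is $(x^{(0)},\dots,x^{(l)})$ with $x^{(0)}=x$, $x^{(l)}=y$, and for each $k=1,\dots,l$ a player $i_k$ with $x^{(k)}_{-i_k}=x^{(k-1)}_{-i_k}$ and $x^{(k)}_{i_k}\ne x^{(k-1)}_{i_k}$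 (length $0$ allowed). It is an I-path if $u_{i_k}(x^{(k)})>u_{i_k}(x^{(k-1)})$ for all $k$, a BR-path if $u_{i_k}(x^{(k)})\ge u_{i_k}(x^{(k-1)})$ for all $k$; monotone if $x^{(0)}\lneq x^{(1)}\lneq\cdots\lneq x^{(l)}$, anti-monotone if $x^{(0)}\gneq\cdots\gneq x^{(l)}$ (where $x\lneq y$ means $x\le y$, $x\neq y$). *)

theory Defs
  imports Complex_Main
begin

definition configs :: "('v \<Rightarrow> int) set" where
  "configs = {x. \<forall>i. x i \<in> {-1, 1}}"

definition supermodular :: "('v \<Rightarrow> ('v \<Rightarrow> int) \<Rightarrow> real) \<Rightarrow> bool" where
  "supermodular u \<longleftrightarrow>
     (\<forall>i. \<forall>x\<in>configs. \<forall>y\<in>configs. (\<forall>j. j \<noteq> i \<longrightarrow> y j \<le> x j) \<longrightarrow>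
        u i (x(i := 1)) - u i (x(i := -1)) \<ge> u i (y(i := 1)) - u i (y(i := -1)))"

definition unilateral :: "'v \<Rightarrow> ('v \<Rightarrow> int) \<Rightarrow> ('v \<Rightarrow> int) \<Rightarrow> bool" where
  "unilateral i x y \<longleftrightarrow> (\<forall>j. j \<noteq> i \<longrightarrow> y j = x j) \<and> y i \<noteq> x i"

definition I_path :: "('v \<Rightarrow> ('v \<Rightarrow> int) \<Rightarrow> real) \<Rightarrow> ('v \<Rightarrow> int) list \<Rightarrow> bool" where
  "I_path u xs \<longleftrightarrow> xs \<noteq> [] \<and> set xs \<subseteq> configs \<and>
     (\<forall>k. Suc k < length xs \<longrightarrow>
        (\<exists>i. unilateral i (xs ! k) (xs ! Suc k) \<and> u i (xs ! Suc k) > u i (xs ! k)))"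

definition BR_path :: "('v \<Rightarrow> ('v \<Rightarrow> int) \<Rightarrow> real) \<Rightarrow> ('v \<Rightarrow> int) list \<Rightarrow> bool" where
  "BR_path u xs \<longleftrightarrow> xs \<noteq> [] \<and> set xs \<subseteq> configs \<and>
     (\<forall>k. Suc k < length xs \<longrightarrow>
        (\<exists>i. unilateral i (xs ! k) (xs ! Suc k) \<and> u i (xs ! Suc k) \<ge> u i (xs ! k)))"

definition monotone_path :: "('v \<Rightarrow> int) list \<Rightarrow> bool" where
  "monotone_path xs \<longleftrightarrow> (\<forall>k. Suc k < length xs \<longrightarrow> xs ! k < xs ! Suc k)"

definition antimonotone_path :: "('v \<Rightarrow> int) list \<Rightarrow> bool" where
  "antimonotone_path xs \<longleftrightarrow> (\<forall>k. Suc k < length xs \<longrightarrow> xs ! k > xs ! Suc k)"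

definition reach :: "(('v \<Rightarrow> int) list \<Rightarrow> bool) \<Rightarrow> ('v \<Rightarrow> int) \<Rightarrow> ('v \<Rightarrow> int) \<Rightarrow> bool" where
  "reach P x y \<longleftrightarrow> (\<exists>xs. P xs \<and> hd xs = x \<and> last xs = y)"

definition reach_up :: "(('v \<Rightarrow> int) list \<Rightarrow> bool) \<Rightarrow> ('v \<Rightarrow> int) \<Rightarrow> ('v \<Rightarrow> int) \<Rightarrow> bool" where
  "reach_up P x y \<longleftrightarrow> (\<exists>xs. P xs \<and> monotone_path xs \<and> hd xs = x \<and> last xs = y)"

definition reach_down :: "(('v \<Rightarrow> int) list \<Rightarrow> bool) \<Rightarrow> ('v \<Rightarrow> int) \<Rightarrow> ('v \<Rightarrow> int) \<Rightarrow> bool" where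
  "reach_down P x y \<longleftrightarrow> (\<exists>xs. P xs \<and> antimonotone_path xs \<and> hd xs = x \<and> last xs = y)"

end

(* Paths are recast as reflexive transitive closures of single moves.  Supermodularity makes an
   upward improvement persist when the rest of the configuration is raised: if switching player i
   from -1 to +1 is an improvement at y, it still is one at every w \<ge> y with w i = -1.  Hence a
   monotone path from x can be replayed from any x' \<ge> x, which gives (iii), and (i) follows by
   replaying the path to z from y.  Along an arbitrary path one maintains a monotone path ending
   above the current configuration, skipping downward steps and replaying upward ones, which gives
   the upper half of (v).  Negating all actions yields again a supermodular game in which
   anti-monotone paths become monotone ones, so (ii), (iv) and the lower half of (v) follow by
   symmetry. *)

theory Submission
  imports Defs
begin

lemma successively_rtranclp:
  "successively r xs \<Longrightarrow> xs \<noteq> [] \<Longrightarrow> r\<^sup>*\<^sup>* (hd xs) (last xs)"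
  by (induction xs rule: induct_list012) (auto intro: converse_rtranclp_into_rtranclp)

lemma rtranclp_successively:
  "r\<^sup>*\<^sup>* x y \<Longrightarrow> \<exists>xs. xs \<noteq> [] \<and> set xs \<subseteq> insert x {b. \<exists>a. r a b} \<and>
      successively r xs \<and> hd xs = x \<and> last xs = y"
proof (induction rule: rtranclp_induct)
  case base
  show ?case by (intro exI[of _ "[x]"]) simp
next
  case (step y z)
  then obtain xs where "xs \<noteq> []" "set xs \<subseteq> insert x {b. \<exists>a. r a b}"
    "successively r xs" "hd xs = x" "last xs = y" by blast
  with step.hyps(2) show ?case
    by (intro exI[of _ "xs @ [z]"]) (auto simp: successively_append_iff)
qed

lemma ex_path_iff_rtranclp:
  assumes "\<And>a b. r a b \<Longrightarrow> a \<in> A \<and> b \<in> A"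
  shows "(\<exists>xs. xs \<noteq> [] \<and> set xs \<subseteq> A \<and> successively r xs \<and> hd xs = x \<and> last xs = y)
    \<longleftrightarrow> x \<in> A \<and> r\<^sup>*\<^sup>* x y"
proof
  assume "\<exists>xs. xs \<noteq> [] \<and> set xs \<subseteq> A \<and> successively r xs \<and> hd xs = x \<and> last xs = y"
  then show "x \<in> A \<and> r\<^sup>*\<^sup>* x y" by (metis hd_in_set subsetD successively_rtranclp)
next
  assume "x \<in> A \<and> r\<^sup>*\<^sup>* x y"
  with rtranclp_successively[of r x y] assms
  show "\<exists>xs. xs \<noteq> [] \<and> set xs \<subseteq> A \<and> successively r xs \<and> hd xs = x \<and> last xs = y"
    by blast
qed

lemma successively_conj_iff:
  "successively (\<lambda>a b. P a b \<and> Q a b) xs \<longleftrightarrow> successively P xs \<and> successively Q xs"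
  by (induction xs rule: induct_list012) auto

lemma rtranclp_map_inverse:
  assumes "\<And>x. f (g x) = x"
  shows "r\<^sup>*\<^sup>* a b \<Longrightarrow> (\<lambda>x y. r (f x) (f y))\<^sup>*\<^sup>* (g a) (g b)"
  by (induction rule: rtranclp_induct) (auto simp: assms intro: rtranclp.rtrancl_into_rtrancl)

lemma fun_uminus_uminus [simp]: "- (- x) = (x :: 'a \<Rightarrow> 'b::group_add)"
  by (simp add: fun_eq_iff)

lemma fun_uminus_less_iff [simp]: "- x < - y \<longleftrightarrow> y < (x :: 'a \<Rightarrow> 'b::ordered_ab_group_add)"
  by (simp add: less_fun_def le_fun_def)

lemma fun_uminus_le_iff [simp]: "- x \<le> - y \<longleftrightarrow> y \<le> (x :: 'a \<Rightarrow> 'b::ordered_ab_group_add)"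
  by (simp add: le_fun_def)

lemma fun_uminus_inf: "- inf x y = sup (- x) (- y :: 'a \<Rightarrow> int)"
  by (simp add: fun_eq_iff inf_min sup_max minus_min_eq_max)

lemma rtranclp_uminus_iff:
  fixes a b :: "'a \<Rightarrow> 'b::group_add"
  shows "r\<^sup>*\<^sup>* (- a) (- b) \<longleftrightarrow> (\<lambda>x y. r (- x) (- y))\<^sup>*\<^sup>* a b"
  using rtranclp_map_inverse[of uminus uminus r "- a" "- b"]
    rtranclp_map_inverse[of uminus uminus "\<lambda>x y. r (- x) (- y)" a b]
  by auto

lemma configs_cases: "x \<in> configs \<Longrightarrow> x i = -1 \<or> x i = 1"
  by (simp add: configs_def)

lemma configs_fun_upd: "x \<in> configs \<Longrightarrow> a \<in> {-1, 1} \<Longrightarrow> x(i := a) \<in> configs"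
  by (simp add: configs_def)

lemma configs_sup: "x \<in> configs \<Longrightarrow> y \<in> configs \<Longrightarrow> sup x y \<in> configs"
  by (auto simp: configs_def sup_max max_def)

lemma uminus_configs_iff [simp]: "- x \<in> configs \<longleftrightarrow> x \<in> configs"
  by (auto simp: configs_def)

lemma unilateral_configs_cases:
  assumes "x \<in> configs" "y \<in> configs" "unilateral i x y"
  obtains "x i = -1" "y = x(i := 1)" | "x i = 1" "y = x(i := -1)"
  using assms configs_cases[OF assms(1), of i] configs_cases[OF assms(2), of i]
  by (fastforce simp: unilateral_def fun_eq_iff)

type_synonym 'v config = "'v \<Rightarrow> int"
type_synonym 'v utilities = "'v \<Rightarrow> 'v config \<Rightarrow> real"

definition improving_move ::
    "'v utilities \<Rightarrow> (real \<Rightarrow> real \<Rightarrow> bool) \<Rightarrow> 'v config \<Rightarrow> 'v config \<Rightarrow> bool" where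
  "improving_move u R x y \<longleftrightarrow> x \<in> configs \<and> y \<in> configs \<and> (\<exists>i. unilateral i x y \<and> R (u i x) (u i y))"

definition up_move ::
    "'v utilities \<Rightarrow> (real \<Rightarrow> real \<Rightarrow> bool) \<Rightarrow> 'v config \<Rightarrow> 'v config \<Rightarrow> bool" where
  "up_move u R x y \<longleftrightarrow> improving_move u R x y \<and> x < y"

definition down_move ::
    "'v utilities \<Rightarrow> (real \<Rightarrow> real \<Rightarrow> bool) \<Rightarrow> 'v config \<Rightarrow> 'v config \<Rightarrow> bool" where
  "down_move u R x y \<longleftrightarrow> improving_move u R x y \<and> y < x"

definition improvement_path ::
    "'v utilities \<Rightarrow> (real \<Rightarrow> real \<Rightarrow> bool) \<Rightarrow> 'v config list \<Rightarrow> bool" where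
  "improvement_path u R xs \<longleftrightarrow> xs \<noteq> [] \<and> set xs \<subseteq> configs \<and> successively (improving_move u R) xs"

lemma I_path_eq: "I_path u = improvement_path u (<)"
  and BR_path_eq: "BR_path u = improvement_path u (\<le>)"
  by (auto simp: fun_eq_iff I_path_def BR_path_def improvement_path_def improving_move_def
      successively_conv_nth)

lemma up_move_iff:
  "up_move u R x y \<longleftrightarrow> x \<in> configs \<and> (\<exists>i. x i = -1 \<and> y = x(i := 1) \<and> R (u i x) (u i y))"
proof
  assume "up_move u R x y"
  then obtain i where "x \<in> configs" "y \<in> configs" "unilateral i x y" and gain: "R (u i x) (u i y)"
    and "x < y"
    by (auto simp: up_move_def improving_move_def)
  from \<open>x \<in> configs\<close> \<open>y \<in> configs\<close> \<open>unilateral i x y\<close>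
  show "x \<in> configs \<and> (\<exists>i. x i = -1 \<and> y = x(i := 1) \<and> R (u i x) (u i y))"
    using gain \<open>x < y\<close> \<open>x \<in> configs\<close>
    by (cases rule: unilateral_configs_cases) (auto simp: less_fun_def le_fun_def dest: spec[of _ i])
next
  assume "x \<in> configs \<and> (\<exists>i. x i = -1 \<and> y = x(i := 1) \<and> R (u i x) (u i y))"
  then show "up_move u R x y"
    by (force simp: up_move_def improving_move_def unilateral_def configs_fun_upd
        less_fun_def le_fun_def fun_eq_iff)
qed

lemma monotone_path_iff: "monotone_path xs \<longleftrightarrow> successively (<) xs"
  and antimonotone_path_iff: "antimonotone_path xs \<longleftrightarrow> successively (>) xs"
  by (simp_all add: monotone_path_def antimonotone_path_def successively_conv_nth)

lemma reach_improvement_path: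
  "reach (improvement_path u R) x y \<longleftrightarrow> x \<in> configs \<and> (improving_move u R)\<^sup>*\<^sup>* x y"
  unfolding reach_def improvement_path_def
  by (subst ex_path_iff_rtranclp[symmetric]) (auto simp: improving_move_def)

lemma reach_up_improvement_path:
  "reach_up (improvement_path u R) x y \<longleftrightarrow> x \<in> configs \<and> (up_move u R)\<^sup>*\<^sup>* x y"
  unfolding reach_up_def improvement_path_def monotone_path_iff up_move_def
  by (subst ex_path_iff_rtranclp[symmetric]) (auto simp: improving_move_def successively_conj_iff)

lemma reach_down_improvement_path:
  "reach_down (improvement_path u R) x y \<longleftrightarrow> x \<in> configs \<and> (down_move u R)\<^sup>*\<^sup>* x y"
  unfolding reach_down_def improvement_path_def antimonotone_path_iff down_move_def
  by (subst ex_path_iff_rtranclp[symmetric]) (auto simp: improving_move_def successively_conj_iff)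

lemma up_moves_configs: "(up_move u R)\<^sup>*\<^sup>* x y \<Longrightarrow> x \<in> configs \<Longrightarrow> y \<in> configs"
  by (induction rule: rtranclp_induct) (auto simp: up_move_def improving_move_def)

lemma up_moves_le: "(up_move u R)\<^sup>*\<^sup>* x y \<Longrightarrow> x \<le> y"
  by (induction rule: rtranclp_induct) (auto simp: up_move_def)

definition gain_mono :: "(real \<Rightarrow> real \<Rightarrow> bool) \<Rightarrow> bool" where
  "gain_mono R \<longleftrightarrow> (\<forall>a b c d. R a b \<longrightarrow> b - a \<le> d - c \<longrightarrow> R c d)"

lemma gain_mono_less: "gain_mono (<)"
  and gain_mono_le: "gain_mono (\<le>)"
  by (auto simp: gain_mono_def)

lemma supermodular_raise_gain:
  assumes "supermodular u" "gain_mono R" "x \<in> configs" "y \<in> configs" "x \<le> y"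
    and "x i = -1" "y i = -1" "R (u i x) (u i (x(i := 1)))"
  shows "R (u i y) (u i (y(i := 1)))"
proof -
  have "u i (x(i := 1)) - u i (x(i := -1)) \<le> u i (y(i := 1)) - u i (y(i := -1))"
    using assms(1,3-5) unfolding supermodular_def le_fun_def by blast
  moreover have "x(i := -1) = x" "y(i := -1) = y"
    using assms(6,7) by auto
  ultimately show ?thesis
    using assms(2,8) unfolding gain_mono_def by fastforce
qed

locale supermodular_game =
  fixes u :: "'v utilities" and R :: "real \<Rightarrow> real \<Rightarrow> bool"
  assumes supermodular: "supermodular u" and gain_mono: "gain_mono R"
begin

lemma up_moves_raise:
  assumes "(up_move u R)\<^sup>*\<^sup>* x w" "w \<in> configs" "y \<in> configs" "y \<le> w"
    and "y i = -1" "R (u i y) (u i (y(i := 1)))"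
  shows "(up_move u R)\<^sup>*\<^sup>* x (w(i := 1))"
proof (cases "w i = 1")
  case True
  then show ?thesis using assms(1) by (simp add: fun_upd_idem)
next
  case False
  then have "w i = -1" using configs_cases[OF assms(2)] by blast
  then have "R (u i w) (u i (w(i := 1)))"
    using supermodular_raise_gain[OF supermodular gain_mono assms(3,2,4,5)] assms(6) by blast
  with \<open>w i = -1\<close> assms(2) have "up_move u R w (w(i := 1))"
    unfolding up_move_iff by blast
  with assms(1) show ?thesis by simp
qed

lemma up_moves_sup_shift:
  assumes "(up_move u R)\<^sup>*\<^sup>* x y" "x \<le> x'" "x' \<in> configs"
  shows "(up_move u R)\<^sup>*\<^sup>* x' (sup y x')"
  using assms(1)
proof (induction rule: rtranclp_induct)
  case base
  show ?case using assms(2) by (simp add: sup_absorb2)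
next
  case (step y z)
  then obtain i where "y \<in> configs" "y i = -1" "z = y(i := 1)" "R (u i y) (u i (y(i := 1)))"
    by (auto simp: up_move_iff)
  then have "(up_move u R)\<^sup>*\<^sup>* x' ((sup y x')(i := 1))"
    using configs_sup[OF \<open>y \<in> configs\<close> assms(3)]
    by (intro up_moves_raise[OF step.IH]) (auto simp: sup_fun_def le_fun_def)
  moreover have "(sup y x')(i := 1) = sup z x'"
    using \<open>z = y(i := 1)\<close> configs_cases[OF assms(3), of i] by (auto simp: fun_eq_iff sup_max)
  ultimately show ?case by (simp only:)
qed

lemma improving_moves_imp_up_moves_above:
  assumes "(improving_move u R)\<^sup>*\<^sup>* x y" "x \<in> configs"
  shows "\<exists>y'. (up_move u R)\<^sup>*\<^sup>* x y' \<and> y \<le> y'"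
  using assms(1)
proof (induction rule: rtranclp_induct)
  case base
  then show ?case by blast
next
  case (step w z)
  then obtain w' i where w': "(up_move u R)\<^sup>*\<^sup>* x w'" "w \<le> w'"
    and move: "w \<in> configs" "z \<in> configs" "unilateral i w z" "R (u i w) (u i z)"
    by (auto simp: improving_move_def)
  have "w' \<in> configs" using up_moves_configs[OF w'(1) assms(2)] .
  from move(1-3) show ?case
  proof (cases rule: unilateral_configs_cases)
    case 1
    with w' move(1,4) \<open>w' \<in> configs\<close> have "(up_move u R)\<^sup>*\<^sup>* x (w'(i := 1))"
      by (intro up_moves_raise) auto
    moreover have "z \<le> w'(i := 1)" using 1 w'(2) by (simp add: le_fun_def)
    ultimately show ?thesis by blast
  next
    case 2
    then have "z \<le> w'"
      using w'(2) configs_cases[OF \<open>w' \<in> configs\<close>, of i] by (auto simp: le_fun_def)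
    with w'(1) show ?thesis by blast
  qed
qed

lemma reach_up_sup:
  assumes "reach_up (improvement_path u R) x y" "reach_up (improvement_path u R) x z"
  shows "reach_up (improvement_path u R) x (sup y z)"
proof -
  from assms have "x \<in> configs" "(up_move u R)\<^sup>*\<^sup>* x y" "(up_move u R)\<^sup>*\<^sup>* x z"
    by (simp_all add: reach_up_improvement_path)
  then have "(up_move u R)\<^sup>*\<^sup>* y (sup z y)"
    by (intro up_moves_sup_shift up_moves_le up_moves_configs[of u R x y])
  with \<open>(up_move u R)\<^sup>*\<^sup>* x y\<close> \<open>x \<in> configs\<close> show ?thesis
    by (simp add: reach_up_improvement_path sup_commute)
qed

lemma reach_up_sup_shift:
  assumes "reach_up (improvement_path u R) x y" "x \<le> x'" "x' \<in> configs"
  shows "reach_up (improvement_path u R) x' (sup y x')"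
  using assms by (auto simp: reach_up_improvement_path intro: up_moves_sup_shift)

lemma reach_imp_reach_up_above:
  assumes "reach (improvement_path u R) x y"
  shows "\<exists>y'\<in>configs. y \<le> y' \<and> reach_up (improvement_path u R) x y'"
proof -
  from assms have "x \<in> configs" "(improving_move u R)\<^sup>*\<^sup>* x y"
    by (simp_all add: reach_improvement_path)
  then obtain y' where "(up_move u R)\<^sup>*\<^sup>* x y'" "y \<le> y'"
    using improving_moves_imp_up_moves_above by blast
  with \<open>x \<in> configs\<close> show ?thesis
    by (auto simp: reach_up_improvement_path intro: up_moves_configs)
qed

end

definition mirror_game :: "'v utilities \<Rightarrow> 'v utilities" where
  "mirror_game u i x = u i (- x)"

lemma supermodular_mirror_game:
  fixes u :: "'v utilities"
  assumes "supermodular u"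
  shows "supermodular (mirror_game u)"
  unfolding supermodular_def
proof (intro allI ballI impI)
  fix i and x y :: "'v config"
  assume "x \<in> configs" "y \<in> configs" "\<forall>j. j \<noteq> i \<longrightarrow> y j \<le> x j"
  then have "u i ((- y)(i := 1)) - u i ((- y)(i := -1)) \<ge> u i ((- x)(i := 1)) - u i ((- x)(i := -1))"
    using assms unfolding supermodular_def by simp
  moreover have "- (z(i := a)) = (- z)(i := - a)" for z :: "'v config" and a
    by (simp add: fun_eq_iff)
  ultimately show "mirror_game u i (x(i := 1)) - mirror_game u i (x(i := -1))
      \<ge> mirror_game u i (y(i := 1)) - mirror_game u i (y(i := -1))"
    by (simp add: mirror_game_def)
qed

lemma improving_move_mirror_game:
  "improving_move (mirror_game u) R (- x) (- y) \<longleftrightarrow> improving_move u R x y"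
  by (simp add: improving_move_def mirror_game_def unilateral_def)

lemma reach_mirror_game:
  "reach (improvement_path (mirror_game u) R) (- x) (- y) \<longleftrightarrow> reach (improvement_path u R) x y"
  by (simp add: reach_improvement_path rtranclp_uminus_iff improving_move_mirror_game)

lemma down_move_eq_mirror_game:
  "down_move u R = (\<lambda>x y. up_move (mirror_game u) R (- x) (- y))"
  by (simp add: fun_eq_iff down_move_def up_move_def improving_move_mirror_game)

lemma reach_up_mirror_game:
  "reach_up (improvement_path (mirror_game u) R) (- x) (- y) \<longleftrightarrow> reach_down (improvement_path u R) x y"
  by (simp add: reach_up_improvement_path reach_down_improvement_path rtranclp_uminus_iff
      down_move_eq_mirror_game)

context supermodular_game
begin

lemma supermodular_game_mirror: "supermodular_game (mirror_game u) R"
  using supermodular gain_mono supermodular_mirror_game by unfold_locales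

lemma reach_down_inf:
  assumes "reach_down (improvement_path u R) x y" "reach_down (improvement_path u R) x z"
  shows "reach_down (improvement_path u R) x (inf y z)"
  using assms supermodular_game.reach_up_sup[OF supermodular_game_mirror, of "- x" "- y" "- z"]
  by (simp add: fun_uminus_inf flip: reach_up_mirror_game)

lemma reach_down_inf_shift:
  assumes "reach_down (improvement_path u R) x y" "x' \<le> x" "x' \<in> configs"
  shows "reach_down (improvement_path u R) x' (inf y x')"
  using assms supermodular_game.reach_up_sup_shift[OF supermodular_game_mirror, of "- x" "- y" "- x'"]
  by (simp add: fun_uminus_inf flip: reach_up_mirror_game)

lemma reach_imp_reach_down_below:
  assumes "reach (improvement_path u R) x y"
  shows "\<exists>y''\<in>configs. y'' \<le> y \<and> reach_down (improvement_path u R) x y''"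
proof -
  from assms obtain w where "w \<in> configs" "- y \<le> w"
    and "reach_up (improvement_path (mirror_game u) R) (- x) w"
    using supermodular_game.reach_imp_reach_up_above[OF supermodular_game_mirror, of "- x" "- y"]
    by (auto simp: reach_mirror_game)
  moreover from this(3) have "reach_down (improvement_path u R) x (- w)"
    using reach_up_mirror_game[of u R x "- w"] by simp
  moreover have "- w \<le> y"
    using fun_uminus_le_iff[of w "- y"] \<open>- y \<le> w\<close> by simp
  ultimately show ?thesis by auto
qed

end

theorem lemma5:
  fixes u :: "'v::finite \<Rightarrow> ('v \<Rightarrow> int) \<Rightarrow> real"
    and P :: "('v \<Rightarrow> int) list \<Rightarrow> bool"
  assumes "supermodular u"
    and "P = I_path u \<or> P = BR_path u"
  shows "\<forall>x\<in>configs. \<forall>x'\<in>configs. \<forall>y\<in>configs. \<forall>z\<in>configs.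
      (reach_up P x y \<and> reach_up P x z \<longrightarrow> reach_up P x (\<lambda>i. max (y i) (z i))) \<and>
      (reach_down P x y \<and> reach_down P x z \<longrightarrow> reach_down P x (\<lambda>i. min (y i) (z i))) \<and>
      (reach_up P x y \<and> x' \<ge> x \<longrightarrow> reach_up P x' (\<lambda>i. max (y i) (x' i))) \<and>
      (reach_down P x y \<and> x' \<le> x \<longrightarrow> reach_down P x' (\<lambda>i. min (y i) (x' i))) \<and>
      (reach P x y \<longrightarrow> (\<exists>y'\<in>configs. \<exists>y''\<in>configs.
          y'' \<le> y \<and> y \<le> y' \<and> reach_up P x y' \<and> reach_down P x y''))"
proof -
  obtain R where P: "P = improvement_path u R" and "gain_mono R"
    using assms(2) I_path_eq BR_path_eq gain_mono_less gain_mono_le by blast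
  with assms(1) interpret supermodular_game u R
    by unfold_locales
  have lattice_ops: "(\<lambda>i. max (y i) (z i)) = sup y z" "(\<lambda>i. min (y i) (z i)) = inf y z"
    for y z :: "'v config"
    by (simp_all add: fun_eq_iff sup_max inf_min)
  show ?thesis
    unfolding P lattice_ops
  proof (intro ballI conjI impI; (elim conjE)?)
    fix x y
    assume "reach (improvement_path u R) x y"
    then show "\<exists>y'\<in>configs. \<exists>y''\<in>configs. y'' \<le> y \<and> y \<le> y' \<and>
        reach_up (improvement_path u R) x y' \<and> reach_down (improvement_path u R) x y''"
      using reach_imp_reach_up_above reach_imp_reach_down_below by blast
  qed (blast intro: reach_up_sup reach_down_inf reach_up_sup_shift reach_down_inf_shift)+
qed

end
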